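(* Let $s, M, Y \in \mathbb{N}$, $N = 2^L$ with $L\ge1$, and let $f_1, \ldots, f_M \in L^2(\mathbb{R}^s)$ be linearly independent. For a tensor $\mathcal{A}$ of order $N$ with dimension $M$ in each mode, let $h(\mathcal{A}) \in L^2((\mathbb{R}^s)^N)$ be the function $(\mathbf{x}_1,\ldots,\mathbf{x}_N) \mapsto \sum_{d_1,\ldots,d_N=1}^M \mathcal{A}_{d_1\ldots d_N} \prod_{i=1}^N f_{d_i}(\mathbf{x}_i)$. The HT model with ranks $r_0,\ldots,r_{L-1}\in\mathbb{N}_{>0}$ has weights $\mathbf{a}^{0,j,\gamma} \in \mathbb{R}^M$ ($j \in [N]$, $\gamma \in [r_0]$), $\mathbf{a}^{l,j,\gamma} \in \mathbb{R}^{r_{l-1}}$ ($l \in [L-1]$, $j \in [N/2^l]$, $\gamma \in [r_l]$), $\mathbf{a}^{L,y} \in \mathbb{R}^{r_{L-1}}$ ($y \in [Y]$), and computes score functions $h_y = h(\mathcal{A}^y)$, $y\in[Y]$, where $\phi^{1,j,\gamma} = \sum_{\alpha=1}^{r_0} a^{1,j,\gamma}_\alpha \mathbf{a}^{0,2j-1,\alpha} \otimes \mathbf{a}^{0,2j,\alpha}$, $\phi^{l,j,\gamma} = \sum_{\alpha=1}^{r_{l-1}} a^{l,j,\gamma}_\alpha \phi^{l-1,2j-1,\alpha} \otimes \phi^{l-1,2j,\alpha}$ for $2 \le l \le L-1$, and $\mathcal{A}^y = \sum_{\alpha=1}^{r_{L-1}} a^{L,y}_\alpha \phi^{L-1,1,\alpha}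 \otimes \phi^{L-1,2,\alpha}$ (for $L=1$, $\mathcal{A}^y=\sum_{\alpha=1}^{r_0}a^{1,y}_\alpha\,\mathbf{a}^{0,1,\alpha}\otimes\mathbf{a}^{0,2,\alpha}$). A CP model with $Z$ hidden channels computes score functions of the form $(\mathbf{x}_1,\ldots,\mathbf{x}_N)\mapsto \sum_{z=1}^Z a_z \prod_{i=1}^N \left( \sum_{d=1}^M a^{z,i}_d f_d(\mathbf{x}_i) \right)$ with arbitrary $a_z \in \mathbb{R}$, $\mathbf{a}^{z,i} \in \mathbb{R}^M$. If the weights of the HT model are drawn from a continuous distribution (absolutely continuous w.r.t. Lebesgue measure on the weight space), then with probability one, for each $y\in[Y]$ the score function $h_y$ cannot be approximated arbitrarily well in $L^2((\mathbb{R}^s)^N)$ by score functions of CP models with fewer than $\min\{r_0, M\}^{N/2}$ hidden channels; that is, there exists $\epsilon > 0$ such that every such CP-model function $g$ satisfies $\int |g - h_y|^2 > \epsilon$. This also holds if the HT model is constrained to weight sharing ($\mathbf{a}^{l,j,\gamma} = \mathbf{a}^{l,\gamma}$ for all $j$, for each $l\in\{0,\ldots,L-1\}$, $\gamma\in[r_l]$, with the shared weights drawn from a continuous distribution), while the CP model remains in its general (unshared) form.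
   Context: $[k]=\{1,\ldots,k\}$; $\otimes$ denotes the tensor product $(\mathcal{A}\otimes\mathcal{B})_{d_1\ldots d_{P+Q}}=\mathcal{A}_{d_1\ldots d_P}\mathcal{B}_{d_{P+1}\ldots d_{P+Q}}$; $a_\alpha$ denotes entry $\alpha$ of vector $\mathbf{a}$. Linear independence of $f_1,\ldots,f_M$ is as elements of the vector space $L^2(\mathbb{R}^s)$. *)

theory Defs
  imports "HOL-Probability.Probability"
begin

type_synonym tensor = "(nat \<Rightarrow> nat) \<Rightarrow> real"
  (* a tensor is indexed by d :: nat => nat, entry d_1 ... d_P read off as d 1, ..., d P *)

definition tensor_prod :: "nat \<Rightarrow> tensor \<Rightarrow> tensor \<Rightarrow> tensor" where
  "tensor_prod P A B = (\<lambda>d. A d * B (\<lambda>i. d (P + i)))"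

(* W l j \<gamma> \<alpha> = entry \<alpha> of weight vector a^{l,j,\<gamma>}; top layer a^{L,y} = W L 1 y *)
fun ht_phi :: "(nat \<Rightarrow> nat \<Rightarrow> nat \<Rightarrow> nat \<Rightarrow> real) \<Rightarrow> (nat \<Rightarrow> nat) \<Rightarrow> nat \<Rightarrow> nat \<Rightarrow> nat \<Rightarrow> tensor" where
  "ht_phi W r 0 j \<gamma> = (\<lambda>d. W 0 j \<gamma> (d 1))"
| "ht_phi W r (Suc l) j \<gamma> = (\<lambda>d. \<Sum>\<alpha>\<in>{1..r l}. W (Suc l) j \<gamma> \<alpha> *
      tensor_prod (2^l) (ht_phi W r l (2*j - 1) \<alpha>) (ht_phi W r l (2*j) \<alpha>) d)"

definition tensor_fn :: "(nat \<Rightarrow> 'a \<Rightarrow> real) \<Rightarrow> nat \<Rightarrow> nat \<Rightarrow> tensor \<Rightarrow> (nat \<Rightarrow> 'a) \<Rightarrow> real" where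
  "tensor_fn f M N A = (\<lambda>x. \<Sum>d\<in>PiE {1..N} (\<lambda>_. {1..M}). A d * (\<Prod>i\<in>{1..N}. f (d i) (x i)))"

definition cp_fn :: "(nat \<Rightarrow> 'a \<Rightarrow> real) \<Rightarrow> nat \<Rightarrow> nat \<Rightarrow> nat \<Rightarrow> (nat \<Rightarrow> real)
      \<Rightarrow> (nat \<Rightarrow> nat \<Rightarrow> nat \<Rightarrow> real) \<Rightarrow> (nat \<Rightarrow> 'a) \<Rightarrow> real" where
  "cp_fn f M N Z a b = (\<lambda>x. \<Sum>z\<in>{1..Z}. a z * (\<Prod>i\<in>{1..N}. \<Sum>d\<in>{1..M}. b z i d * f d (x i)))"

definition is_L2 :: "('a::euclidean_space \<Rightarrow> real) \<Rightarrow> bool" where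
  "is_L2 g \<longleftrightarrow> g \<in> borel_measurable lborel \<and> integrable lborel (\<lambda>x. (g x)^2)"

definition L2_lin_indep :: "(nat \<Rightarrow> 'a::euclidean_space \<Rightarrow> real) \<Rightarrow> nat \<Rightarrow> bool" where
  "L2_lin_indep f M \<longleftrightarrow> (\<forall>c. (AE x in lborel. (\<Sum>d\<in>{1..M}. c d * f d x) = 0) \<longrightarrow> (\<forall>d\<in>{1..M}. c d = 0))"

definition not_CP_approximable :: "(nat \<Rightarrow> 'a::euclidean_space \<Rightarrow> real) \<Rightarrow> nat \<Rightarrow> nat \<Rightarrow> ((nat \<Rightarrow> 'a) \<Rightarrow> real) \<Rightarrow> nat \<Rightarrow> bool" where
  "not_CP_approximable f M N h bound \<longleftrightarrow>
     (\<exists>\<epsilon>>0. \<forall>Z<bound. \<forall>a b.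
        (\<integral>\<^sup>+ x. ennreal ((cp_fn f M N Z a b x - h x)^2) \<partial>(PiM {1..N} (\<lambda>_. lborel))) > ennreal \<epsilon>)"

(* index set of all HT weights: (l, j, gamma, alpha) = entry alpha of a^{l,j,gamma}; top: (L,1,y,alpha) *)
definition ht_idx :: "nat \<Rightarrow> nat \<Rightarrow> nat \<Rightarrow> (nat \<Rightarrow> nat) \<Rightarrow> nat \<Rightarrow> (nat \<times> nat \<times> nat \<times> nat) set" where
  "ht_idx M N L r Y =
     {(0, j, \<gamma>, d) | j \<gamma> d. j \<in> {1..N} \<and> \<gamma> \<in> {1..r 0} \<and> d \<in> {1..M}}
   \<union> {(l, j, \<gamma>, \<alpha>) | l j \<gamma> \<alpha>. 1 \<le> l \<and> l < L \<and> j \<in> {1..N div 2^l} \<and> \<gamma> \<in> {1..r l} \<and> \<alpha> \<in> {1..r (l - 1)}}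
   \<union> {(L, 1, y, \<alpha>) | y \<alpha>. y \<in> {1..Y} \<and> \<alpha> \<in> {1..r (L - 1)}}"

(* weight sharing: (l, 1, gamma, alpha) = entry alpha of shared a^{l,gamma} *)
definition ht_shared_idx :: "nat \<Rightarrow> nat \<Rightarrow> (nat \<Rightarrow> nat) \<Rightarrow> nat \<Rightarrow> (nat \<times> nat \<times> nat \<times> nat) set" where
  "ht_shared_idx M L r Y =
     {(0, 1, \<gamma>, d) | \<gamma> d. \<gamma> \<in> {1..r 0} \<and> d \<in> {1..M}}
   \<union> {(l, 1, \<gamma>, \<alpha>) | l \<gamma> \<alpha>. 1 \<le> l \<and> l < L \<and> \<gamma> \<in> {1..r l} \<and> \<alpha> \<in> {1..r (l - 1)}}
   \<union> {(L, 1, y, \<alpha>) | y \<alpha>. y \<in> {1..Y} \<and> \<alpha> \<in> {1..r (L - 1)}}"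

definition continuous_weight_dist :: "'i set \<Rightarrow> ('i \<Rightarrow> real) measure \<Rightarrow> bool" where
  "continuous_weight_dist I P \<longleftrightarrow> prob_space P \<and> sets P = sets (PiM I (\<lambda>_. lborel))
     \<and> absolutely_continuous (PiM I (\<lambda>_. lborel)) P"

end

(* The coefficient tensor of a CP model with Z hidden channels has an odd/even matricization of
   rank at most Z.  Since f_1, ..., f_M admit a dual family in L^2, approximating h(A) in L^2 by
   CP score functions forces their coefficient tensors to converge to A entrywise, so every minor
   of the matricization of A would be a limit of vanishing determinants.  For the HT model, one
   minor of size min(r_0, M)^(N/2) is a polynomial in the weights that equals 1 at the weights
   making every phi a tensor product of truncated identity matrices; its zero set is therefore
   Lebesgue-null, hence has probability zero under any continuous weight distribution, with or
   without weight sharing. *)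

theory Submission
  imports
    Defs
    "HOL-Computational_Algebra.Polynomial"
    "HOL-Real_Asymp.Real_Asymp"
    "Jordan_Normal_Form.Determinant"
begin

section \<open>Polynomial functions of the weights\<close>

inductive_set poly_fun :: "'i set \<Rightarrow> (('i \<Rightarrow> real) \<Rightarrow> real) set" for I where
  poly_fun_const: "(\<lambda>w. c) \<in> poly_fun I"
| poly_fun_var: "i \<in> I \<Longrightarrow> (\<lambda>w. w i) \<in> poly_fun I"
| poly_fun_add: "p \<in> poly_fun I \<Longrightarrow> q \<in> poly_fun I \<Longrightarrow> (\<lambda>w. p w + q w) \<in> poly_fun I"
| poly_fun_mult: "p \<in> poly_fun I \<Longrightarrow> q \<in> poly_fun I \<Longrightarrow> (\<lambda>w. p w * q w) \<in> poly_fun I"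

lemma poly_fun_sum:
  "finite S \<Longrightarrow> (\<And>s. s \<in> S \<Longrightarrow> p s \<in> poly_fun I) \<Longrightarrow> (\<lambda>w. \<Sum>s\<in>S. p s w) \<in> poly_fun I"
  by (induction S rule: finite_induct) (auto intro: poly_fun.intros)

lemma poly_fun_prod:
  "finite S \<Longrightarrow> (\<And>s. s \<in> S \<Longrightarrow> p s \<in> poly_fun I) \<Longrightarrow> (\<lambda>w. \<Prod>s\<in>S. p s w) \<in> poly_fun I"
  by (induction S rule: finite_induct) (auto intro: poly_fun.intros)

lemma poly_fun_cong:
  "p \<in> poly_fun I \<Longrightarrow> (\<And>i. i \<in> I \<Longrightarrow> w i = v i) \<Longrightarrow> p w = p v"
  by (induction rule: poly_fun.induct) auto

lemma poly_fun_measurable: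
  "p \<in> poly_fun I \<Longrightarrow> p \<in> borel_measurable (PiM I (\<lambda>_. lborel))"
  by (induction rule: poly_fun.induct) auto

lemma poly_fun_restrict:
  "p \<in> poly_fun UNIV \<Longrightarrow> (\<lambda>w. p (restrict w I)) \<in> poly_fun I"
proof (induction rule: poly_fun.induct)
  case (poly_fun_var i)
  then show ?case by (cases "i \<in> I") (simp_all add: poly_fun.intros)
qed (simp_all add: poly_fun.intros)

lemma poly_fun_as_poly_in_var:
  assumes "p \<in> poly_fun (insert i J)"
  obtains P where "\<And>k. (\<lambda>w. coeff (P w) k) \<in> poly_fun J" and "\<And>w. p w = poly (P w) (w i)"
proof -
  from assms have "\<exists>P. (\<forall>k. (\<lambda>w. coeff (P w) k) \<in> poly_fun J) \<and> (\<forall>w. p w = poly (P w) (w i))"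
  proof (induction rule: poly_fun.induct)
    case (poly_fun_const c)
    show ?case
      by (rule exI[of _ "\<lambda>w. [:c:]"]) (auto simp: coeff_pCons split: nat.split intro: poly_fun.intros)
  next
    case (poly_fun_var j)
    show ?case
    proof (cases "j = i")
      case True
      then show ?thesis
        by (intro exI[of _ "\<lambda>w. [:0, 1:]"]) (auto simp: coeff_pCons split: nat.split intro: poly_fun.intros)
    next
      case False
      with poly_fun_var have "j \<in> J" by simp
      then have "(\<lambda>w. coeff [:w j:] k) \<in> poly_fun J" for k
        by (cases k) (simp_all add: poly_fun.intros)
      then show ?thesis by (intro exI[of _ "\<lambda>w. [:w j:]"]) simp
    qed
  next
    case (poly_fun_add p q)
    then obtain P Q where "\<forall>k. (\<lambda>w. coeff (P w) k) \<in> poly_fun J" "\<forall>w. p w = poly (P w) (w i)"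
      "\<forall>k. (\<lambda>w. coeff (Q w) k) \<in> poly_fun J" "\<forall>w. q w = poly (Q w) (w i)" by blast
    then show ?case
      by (intro exI[of _ "\<lambda>w. P w + Q w"]) (auto intro: poly_fun.intros)
  next
    case (poly_fun_mult p q)
    then obtain P Q where P: "\<And>k. (\<lambda>w. coeff (P w) k) \<in> poly_fun J" "\<forall>w. p w = poly (P w) (w i)"
      and Q: "\<And>k. (\<lambda>w. coeff (Q w) k) \<in> poly_fun J" "\<forall>w. q w = poly (Q w) (w i)" by blast
    have "(\<lambda>w. coeff (P w * Q w) k) \<in> poly_fun J" for k
      unfolding coeff_mult by (intro poly_fun_sum poly_fun.poly_fun_mult P Q) simp
    with P Q show ?case
      by (intro exI[of _ "\<lambda>w. P w * Q w"]) auto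
  qed
  with that show thesis by blast
qed

lemma null_sets_PiM_insert:
  assumes "finite J" and "i \<notin> J" and S: "S \<in> sets (PiM (insert i J) (\<lambda>_. lborel :: real measure))"
    and fibres: "AE x in PiM J (\<lambda>_. lborel). (\<integral>\<^sup>+ y. indicator S (x(i := y)) \<partial>lborel) = 0"
  shows "S \<in> null_sets (PiM (insert i J) (\<lambda>_. lborel))"
proof -
  interpret product_sigma_finite "\<lambda>_. lborel :: real measure"
    by (simp add: product_sigma_finite_def lborel.sigma_finite_measure_axioms)
  have "emeasure (PiM (insert i J) (\<lambda>_. lborel)) S = (\<integral>\<^sup>+ w. indicator S w \<partial>PiM (insert i J) (\<lambda>_. lborel))"
    using S by simp
  also have "\<dots> = (\<integral>\<^sup>+ x. (\<integral>\<^sup>+ y. indicator S (x(i := y)) \<partial>lborel) \<partial>PiM J (\<lambda>_. lborel))"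
    using S assms(1,2) by (intro product_nn_integral_insert) auto
  also have "\<dots> = 0"
    by (subst nn_integral_cong_AE[OF fibres]) simp
  finally show ?thesis using S by (simp add: null_sets_def)
qed

lemma poly_fun_zero_set_null:
  assumes "finite I" and "p \<in> poly_fun I" and "p w0 \<noteq> 0"
  shows "{w \<in> space (PiM I (\<lambda>_. lborel)). p w = 0} \<in> null_sets (PiM I (\<lambda>_. lborel))"
  using assms
proof (induction I arbitrary: p w0 rule: finite_induct)
  case empty
  then have "p w \<noteq> 0" for w
    using poly_fun_cong[OF empty(1), of w w0] by auto
  then show ?case by simp
next
  case (insert i J)
  obtain P where coeff_poly: "\<And>k. (\<lambda>w. coeff (P w) k) \<in> poly_fun J"
    and p_eq: "\<And>w. p w = poly (P w) (w i)"
    using poly_fun_as_poly_in_var[OF insert.prems(1)] by blast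
  have "P w0 \<noteq> 0" using insert.prems(2) p_eq by auto
  then obtain k where k: "coeff (P w0) k \<noteq> 0" by (metis coeff_0 poly_eqI)
  have P_update: "P (x(i := y)) = P x" for x y
    by (rule poly_eqI, rule poly_fun_cong[OF coeff_poly]) (use insert.hyps(2) in auto)
  let ?S = "{w \<in> space (PiM (insert i J) (\<lambda>_. lborel)). p w = 0}"
  have "p \<in> borel_measurable (PiM (insert i J) (\<lambda>_. lborel))"
    by (rule poly_fun_measurable[OF insert.prems(1)])
  then have "?S \<in> sets (PiM (insert i J) (\<lambda>_. lborel))"
    by measurable
  then show ?case
  proof (rule null_sets_PiM_insert[OF insert.hyps])
    have "AE x in PiM J (\<lambda>_. lborel). coeff (P x) k \<noteq> 0"
      by (rule AE_I'[OF insert.IH[OF coeff_poly k]]) auto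
    then show "AE x in PiM J (\<lambda>_. lborel). (\<integral>\<^sup>+ y. indicator ?S (x(i := y)) \<partial>lborel) = 0"
    proof eventually_elim
      case (elim x)
      then have "finite {y. poly (P x) y = 0}"
        by (intro poly_roots_finite) auto
      then have "{y. poly (P x) y = 0} \<in> null_sets lborel"
        by (rule finite_imp_null_set_lborel)
      then have "(\<integral>\<^sup>+ y. indicator {y. poly (P x) y = 0} y \<partial>lborel) = 0"
        by (simp add: null_sets_def)
      moreover have "(\<integral>\<^sup>+ y. indicator ?S (x(i := y)) \<partial>lborel)
          \<le> (\<integral>\<^sup>+ y. indicator {y. poly (P x) y = 0} y \<partial>lborel)"
        by (rule nn_integral_mono) (auto simp: indicator_def p_eq P_update)
      ultimately show ?case by simp
    qed
  qed
qed

lemma AE_poly_fun_nonzero: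
  assumes "finite I" and "continuous_weight_dist I P"
    and "p \<in> poly_fun UNIV" and "w0 \<in> PiE I (\<lambda>_. UNIV)" and "p w0 \<noteq> 0"
  shows "AE w in P. p w \<noteq> 0"
proof -
  have sets_P: "sets P = sets (PiM I (\<lambda>_. lborel))"
    and ac: "absolutely_continuous (PiM I (\<lambda>_. lborel)) P"
    using assms(2) unfolding continuous_weight_dist_def by auto
  have "restrict w0 I = w0" using assms(4) by (simp add: PiE_restrict)
  then have "{w \<in> space (PiM I (\<lambda>_. lborel)). p (restrict w I) = 0} \<in> null_sets (PiM I (\<lambda>_. lborel))"
    using poly_fun_zero_set_null[OF assms(1) poly_fun_restrict[OF assms(3)], of w0] assms(5) by simp
  then have null: "{w \<in> space (PiM I (\<lambda>_. lborel)). p (restrict w I) = 0} \<in> null_sets P"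
    using ac unfolding absolutely_continuous_def by auto
  have "space P = PiE I (\<lambda>_. UNIV)"
    using sets_eq_imp_space_eq[OF sets_P] by (simp add: space_PiM)
  then show ?thesis
    by (intro AE_I'[OF null]) (auto simp: space_PiM PiE_restrict)
qed

lemma det_poly_fun:
  assumes "\<And>w. A w \<in> carrier_mat n n"
    and "\<And>i j. i < n \<Longrightarrow> j < n \<Longrightarrow> (\<lambda>w. A w $$ (i, j)) \<in> poly_fun I"
  shows "(\<lambda>w. det (A w)) \<in> poly_fun I"
proof -
  have entry: "(\<lambda>w. A w $$ (i, p i)) \<in> poly_fun I" if "p permutes {0..<n}" "i \<in> {0..<n}" for p i
    using that assms(2) permutes_in_image by fastforce
  show ?thesis
    unfolding det_def'[OF assms(1)]
    by (intro poly_fun_sum poly_fun_mult poly_fun_const poly_fun_prod entry) (auto simp: finite_permutations)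
qed

section \<open>Square-integrable functions\<close>

lemma square_integrable_mult:
  fixes g h :: "'a \<Rightarrow> real"
  assumes "g \<in> borel_measurable M" and "h \<in> borel_measurable M"
    and "integrable M (\<lambda>x. (g x)\<^sup>2)" and "integrable M (\<lambda>x. (h x)\<^sup>2)"
  shows "integrable M (\<lambda>x. g x * h x)"
proof (rule Bochner_Integration.integrable_bound)
  show "integrable M (\<lambda>x. (g x)\<^sup>2 + (h x)\<^sup>2)" and "(\<lambda>x. g x * h x) \<in> borel_measurable M"
    using assms by auto
  have "\<bar>a * b\<bar> \<le> a\<^sup>2 + b\<^sup>2" for a b :: real
  proof -
    have "2 * \<bar>a\<bar> * \<bar>b\<bar> \<le> a\<^sup>2 + b\<^sup>2"
      using sum_squares_bound[of "\<bar>a\<bar>" "\<bar>b\<bar>"] by (simp add: power2_abs)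
    moreover have "0 \<le> \<bar>a\<bar> * \<bar>b\<bar>" by simp
    ultimately show ?thesis unfolding abs_mult by linarith
  qed
  then show "AE x in M. norm (g x * h x) \<le> norm ((g x)\<^sup>2 + (h x)\<^sup>2)"
    by simp
qed

lemma is_L2_mult_integrable:
  "is_L2 g \<Longrightarrow> is_L2 h \<Longrightarrow> integrable lborel (\<lambda>x. g x * h x)"
  unfolding is_L2_def by (simp add: square_integrable_mult)

lemma is_L2_lincomb:
  fixes g :: "'i \<Rightarrow> 'a::euclidean_space \<Rightarrow> real"
  assumes "finite J" and "\<forall>j\<in>J. is_L2 (g j)"
  shows "is_L2 (\<lambda>x. \<Sum>j\<in>J. c j * g j x)"
  unfolding is_L2_def
proof
  show "(\<lambda>x. \<Sum>j\<in>J. c j * g j x) \<in> borel_measurable lborel"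
    using assms(2) unfolding is_L2_def by (auto intro!: borel_measurable_sum)
  have "(\<Sum>j\<in>J. c j * g j x)\<^sup>2 = (\<Sum>a\<in>J. \<Sum>b\<in>J. c a * c b * (g a x * g b x))" for x
    by (simp add: power2_eq_square sum_product algebra_simps)
  then show "integrable lborel (\<lambda>x. (\<Sum>j\<in>J. c j * g j x)\<^sup>2)"
    using assms(2) by (simp add: is_L2_mult_integrable)
qed

lemma integral_lincomb:
  fixes h :: "'i \<Rightarrow> 'a \<Rightarrow> real"
  assumes "finite J" and "\<And>j. j \<in> J \<Longrightarrow> integrable M (h j)"
  shows "(\<integral>x. (\<Sum>j\<in>J. c j * h j x) \<partial>M) = (\<Sum>j\<in>J. c j * (\<integral>x. h j x \<partial>M))"
  using assms by (simp add: Bochner_Integration.integral_sum)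

lemma L2_gram_det_nonzero:
  fixes g :: "nat \<Rightarrow> 'a::euclidean_space \<Rightarrow> real"
  assumes L2: "\<forall>j<n. is_L2 (g j)"
    and indep: "\<And>c. AE x in lborel. (\<Sum>j<n. c j * g j x) = 0 \<Longrightarrow> \<forall>j<n. c j = 0"
  shows "det (mat n n (\<lambda>(a, b). \<integral>x. g a x * g b x \<partial>lborel)) \<noteq> 0"
proof
  define G where "G = mat n n (\<lambda>(a, b). \<integral>x. g a x * g b x \<partial>lborel)"
  assume "det (mat n n (\<lambda>(a, b). \<integral>x. g a x * g b x \<partial>lborel)) = 0"
  then obtain v where v: "v \<in> carrier_vec n" "v \<noteq> 0\<^sub>v n" "G *\<^sub>v v = 0\<^sub>v n"
    using det_0_iff_vec_prod_zero[of G n] unfolding G_def by auto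
  define S where "S x = (\<Sum>j<n. v $ j * g j x)" for x
  have S: "is_L2 S"
    unfolding S_def using L2 by (intro is_L2_lincomb) auto
  have gS: "(\<integral>x. g a x * S x \<partial>lborel) = (G *\<^sub>v v) $ a" if "a < n" for a
  proof -
    have "g a x * S x = (\<Sum>b<n. v $ b * (g a x * g b x))" for x
      unfolding S_def by (simp add: sum_distrib_left mult.left_commute)
    then have "(\<integral>x. g a x * S x \<partial>lborel) = (\<Sum>b<n. v $ b * (\<integral>x. g a x * g b x \<partial>lborel))"
      using L2 that by (simp add: integral_lincomb is_L2_mult_integrable)
    also have "\<dots> = (G *\<^sub>v v) $ a"
      using v(1) that by (simp add: G_def scalar_prod_def atLeast0LessThan mult.commute)
    finally show ?thesis .
  qed
  have "S x * S x = (\<Sum>a<n. v $ a * (g a x * S x))" for x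
    by (subst (1) S_def) (simp add: sum_distrib_right mult.assoc)
  then have "(\<integral>x. S x * S x \<partial>lborel) = (\<Sum>a<n. v $ a * (\<integral>x. g a x * S x \<partial>lborel))"
    using L2 S by (simp add: integral_lincomb is_L2_mult_integrable)
  also have "\<dots> = 0"
    using gS v(3) by (intro sum.neutral) simp
  finally have "(\<integral>x. S x * S x \<partial>lborel) = 0" .
  moreover have "integrable lborel (\<lambda>x. S x * S x)"
    by (rule is_L2_mult_integrable[OF S S])
  ultimately have "AE x in lborel. S x = 0"
    by (subst (asm) integral_nonneg_eq_0_iff_AE) auto
  then have "\<forall>j<n. v $ j = 0"
    using indep[of "\<lambda>j. v $ j"] unfolding S_def by blast
  then show False using v(1,2) by (auto intro: eq_vecI)
qed

lemma L2_dual_family: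
  fixes g :: "nat \<Rightarrow> 'a::euclidean_space \<Rightarrow> real"
  assumes L2: "\<forall>j<n. is_L2 (g j)"
    and indep: "\<And>c. AE x in lborel. (\<Sum>j<n. c j * g j x) = 0 \<Longrightarrow> \<forall>j<n. c j = 0"
  obtains u where "\<forall>k<n. is_L2 (u k)"
    and "\<forall>a<n. \<forall>k<n. (\<integral>x. g a x * u k x \<partial>lborel) = of_bool (a = k)"
proof -
  define G where "G = mat n n (\<lambda>(a, b). \<integral>x. g a x * g b x \<partial>lborel)"
  have G: "G \<in> carrier_mat n n" unfolding G_def by simp
  have "det G \<noteq> 0" unfolding G_def using L2 indep by (rule L2_gram_det_nonzero)
  then have "G \<in> Units (ring_mat TYPE(real) n ())" by (rule det_non_zero_imp_unit[OF G])
  then obtain H where H: "H \<in> carrier_mat n n" "G * H = 1\<^sub>m n"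
    unfolding Units_def ring_mat_def by auto
  define u where "u k x = (\<Sum>j<n. H $$ (j, k) * g j x)" for k x
  have "is_L2 (u k)" for k
    unfolding u_def using L2 by (intro is_L2_lincomb) auto
  moreover have "(\<integral>x. g a x * u k x \<partial>lborel) = of_bool (a = k)" if "a < n" "k < n" for a k
  proof -
    have "g a x * u k x = (\<Sum>j<n. H $$ (j, k) * (g a x * g j x))" for x
      unfolding u_def by (simp add: sum_distrib_left mult.left_commute)
    then have "(\<integral>x. g a x * u k x \<partial>lborel) = (\<Sum>j<n. H $$ (j, k) * G $$ (a, j))"
      using L2 that by (simp add: integral_lincomb is_L2_mult_integrable G_def)
    also have "\<dots> = (G * H) $$ (a, k)"
      using that G H(1) by (simp add: scalar_prod_def atLeast0LessThan mult.commute)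
    finally show ?thesis using H(2) that by simp
  qed
  ultimately show thesis using that by blast
qed

lemma L2_lin_indep_dual:
  fixes f :: "nat \<Rightarrow> 'a::euclidean_space \<Rightarrow> real"
  assumes L2: "\<forall>d\<in>{1..M}. is_L2 (f d)" and indep: "L2_lin_indep f M"
  obtains u where "\<forall>k\<in>{1..M}. is_L2 (u k)"
    and "\<forall>d\<in>{1..M}. \<forall>k\<in>{1..M}. (\<integral>x. f d x * u k x \<partial>lborel) = of_bool (d = k)"
proof -
  have "\<forall>j<M. c j = 0" if "AE x in lborel. (\<Sum>j<M. c j * f (Suc j) x) = 0" for c
  proof -
    have "AE x in lborel. (\<Sum>d\<in>{1..M}. c (d - 1) * f d x) = 0"
      using that by (simp add: sum.atLeast1_atMost_eq)
    then have c: "\<forall>d\<in>{1..M}. c (d - 1) = 0"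
      using indep[unfolded L2_lin_indep_def, rule_format, of "\<lambda>d. c (d - 1)"] by blast
    show ?thesis
    proof (intro allI impI)
      fix j assume "j < M"
      then show "c j = 0" using c[rule_format, of "Suc j"] by simp
    qed
  qed
  moreover have "\<forall>j<M. is_L2 (f (Suc j))" using L2 by auto
  ultimately obtain u where u: "\<forall>k<M. is_L2 (u k)"
    and dual: "\<forall>a<M. \<forall>k<M. (\<integral>x. f (Suc a) x * u k x \<partial>lborel) = of_bool (a = k)"
    using L2_dual_family[of M "\<lambda>j. f (Suc j)"] by blast
  show thesis
  proof (intro that[of "\<lambda>k. u (k - 1)"] ballI)
    fix k assume "k \<in> {1..M}"
    then show "is_L2 (u (k - 1))" using u by auto
  next
    fix d k assume "d \<in> {1..M}" "k \<in> {1..M}"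
    then show "(\<integral>x. f d x * u (k - 1) x \<partial>lborel) = of_bool (d = k)"
      using dual[rule_format, of "d - 1" "k - 1"] by auto
  qed
qed

section \<open>Tensor functions\<close>

lemma
  fixes G :: "'i \<Rightarrow> 'a::euclidean_space \<Rightarrow> real"
  assumes "finite S" and "\<And>i. i \<in> S \<Longrightarrow> integrable lborel (G i)"
  shows integrable_PiM_prod: "integrable (PiM S (\<lambda>_. lborel)) (\<lambda>x. \<Prod>i\<in>S. G i (x i))"
    and integral_PiM_prod: "(\<integral>x. (\<Prod>i\<in>S. G i (x i)) \<partial>PiM S (\<lambda>_. lborel)) = (\<Prod>i\<in>S. \<integral>x. G i x \<partial>lborel)"
proof -
  interpret product_sigma_finite "\<lambda>_. lborel :: 'a measure"
    by (simp add: product_sigma_finite_def lborel.sigma_finite_measure_axioms)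
  show "integrable (PiM S (\<lambda>_. lborel)) (\<lambda>x. \<Prod>i\<in>S. G i (x i))"
    using assms by (intro product_integrable_prod) auto
  show "(\<integral>x. (\<Prod>i\<in>S. G i (x i)) \<partial>PiM S (\<lambda>_. lborel)) = (\<Prod>i\<in>S. \<integral>x. G i x \<partial>lborel)"
    using assms by (intro product_integral_prod) auto
qed

lemma tensor_fn_measurable:
  assumes "\<forall>d\<in>{1..M}. is_L2 (f d)"
  shows "tensor_fn f M N C \<in> borel_measurable (PiM {1..N} (\<lambda>_. lborel))"
proof -
  have "(\<lambda>x. f (d i) (x i)) \<in> borel_measurable (PiM {1..N} (\<lambda>_. lborel))"
    if "d \<in> PiE {1..N} (\<lambda>_. {1..M})" and "i \<in> {1..N}" for d i
    using that assms unfolding is_L2_def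
    by (intro measurable_compose[OF measurable_component_singleton]) auto
  then show ?thesis
    unfolding tensor_fn_def by (intro borel_measurable_sum borel_measurable_times borel_measurable_prod) auto
qed

lemma tensor_fn_square_integrable:
  assumes "\<forall>d\<in>{1..M}. is_L2 (f d)"
  shows "integrable (PiM {1..N} (\<lambda>_. lborel)) (\<lambda>x. (tensor_fn f M N C x)\<^sup>2)"
proof -
  let ?D = "PiE {1..N} (\<lambda>_. {1..M})"
  have "(tensor_fn f M N C x)\<^sup>2
      = (\<Sum>d\<in>?D. \<Sum>d'\<in>?D. C d * C d' * (\<Prod>i\<in>{1..N}. f (d i) (x i) * f (d' i) (x i)))" for x
    unfolding tensor_fn_def power2_eq_square sum_product prod.distrib by (simp add: algebra_simps)
  moreover have "integrable (PiM {1..N} (\<lambda>_. lborel)) (\<lambda>x. \<Prod>i\<in>{1..N}. f (d i) (x i) * f (d' i) (x i))"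
    if "d \<in> ?D" and "d' \<in> ?D" for d d'
    using that assms by (intro integrable_PiM_prod is_L2_mult_integrable) auto
  ultimately show ?thesis by simp
qed

lemma tensor_fn_coefficient_integral:
  assumes f: "\<forall>d\<in>{1..M}. is_L2 (f d)" and u: "\<forall>k\<in>{1..M}. is_L2 (u k)"
    and dual: "\<forall>d\<in>{1..M}. \<forall>k\<in>{1..M}. (\<integral>x. f d x * u k x \<partial>lborel) = of_bool (d = k)"
    and d: "d \<in> PiE {1..N} (\<lambda>_. {1..M})"
  shows "(\<integral>x. tensor_fn f M N C x * (\<Prod>i\<in>{1..N}. u (d i) (x i)) \<partial>PiM {1..N} (\<lambda>_. lborel)) = C d"
proof -
  let ?D = "PiE {1..N} (\<lambda>_. {1..M})"
  let ?F = "\<lambda>d' x. \<Prod>i\<in>{1..N}. f (d' i) (x i) * u (d i) (x i)"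
  have integral_F: "(\<integral>x. ?F d' x \<partial>PiM {1..N} (\<lambda>_. lborel)) = of_bool (d' = d)" if d': "d' \<in> ?D" for d'
  proof -
    have "(\<integral>x. ?F d' x \<partial>PiM {1..N} (\<lambda>_. lborel)) = (\<Prod>i\<in>{1..N}. \<integral>x. f (d' i) x * u (d i) x \<partial>lborel)"
      using d d' f u by (intro integral_PiM_prod is_L2_mult_integrable) auto
    also have "\<dots> = (\<Prod>i\<in>{1..N}. of_bool (d' i = d i))"
    proof (rule prod.cong[OF refl])
      fix i assume "i \<in> {1..N}"
      then have "d' i \<in> {1..M}" "d i \<in> {1..M}" using d d' by auto
      then show "(\<integral>x. f (d' i) x * u (d i) x \<partial>lborel) = of_bool (d' i = d i)"
        using dual by blast
    qed
    also have "\<dots> = of_bool (d' = d)"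
      using PiE_ext[OF d' d] d d' by (auto intro: prod_zero)
    finally show ?thesis .
  qed
  have "tensor_fn f M N C x * (\<Prod>i\<in>{1..N}. u (d i) (x i)) = (\<Sum>d'\<in>?D. C d' * ?F d' x)" for x
    unfolding tensor_fn_def sum_distrib_right prod.distrib by (simp add: algebra_simps)
  moreover have "integrable (PiM {1..N} (\<lambda>_. lborel)) (?F d')" if "d' \<in> ?D" for d'
    using that d f u by (intro integrable_PiM_prod is_L2_mult_integrable) auto
  ultimately have "(\<integral>x. tensor_fn f M N C x * (\<Prod>i\<in>{1..N}. u (d i) (x i)) \<partial>PiM {1..N} (\<lambda>_. lborel))
      = (\<Sum>d'\<in>?D. C d' * (\<integral>x. ?F d' x \<partial>PiM {1..N} (\<lambda>_. lborel)))"
    by (simp add: integral_lincomb finite_PiE)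
  also have "\<dots> = (\<Sum>d'\<in>?D. C d' * of_bool (d' = d))"
    by (rule sum.cong[OF refl], subst integral_F) auto
  also have "\<dots> = C d"
    using d by (simp add: finite_PiE)
  finally show ?thesis .
qed

lemma abs_mult_le_weighted_squares:
  fixes a b t :: real
  assumes "t > 0"
  shows "\<bar>a * b\<bar> \<le> (t * a\<^sup>2 + b\<^sup>2 / t) / 2"
proof -
  have "0 \<le> (t * \<bar>a\<bar> - \<bar>b\<bar>)\<^sup>2" by simp
  then have "2 * t * \<bar>a * b\<bar> \<le> t\<^sup>2 * a\<^sup>2 + b\<^sup>2"
    by (simp add: power2_diff power_mult_distrib abs_mult algebra_simps)
  then show ?thesis
    using assms by (simp add: field_simps power2_eq_square)
qed

lemma tensor_fn_coefficient_bound: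
  fixes f :: "nat \<Rightarrow> 'a::euclidean_space \<Rightarrow> real"
  assumes f: "\<forall>d\<in>{1..M}. is_L2 (f d)" and indep: "L2_lin_indep f M"
    and d: "d \<in> PiE {1..N} (\<lambda>_. {1..M})"
  obtains K where "\<And>C t. t > 0 \<Longrightarrow>
    \<bar>C d\<bar> \<le> (t * (\<integral>x. (tensor_fn f M N C x)\<^sup>2 \<partial>PiM {1..N} (\<lambda>_. lborel)) + K / t) / 2"
proof -
  let ?P = "PiM {1..N} (\<lambda>_. lborel :: 'a measure)"
  obtain u where u: "\<forall>k\<in>{1..M}. is_L2 (u k)"
    and dual: "\<forall>d\<in>{1..M}. \<forall>k\<in>{1..M}. (\<integral>x. f d x * u k x \<partial>lborel) = of_bool (d = k)"
    using L2_lin_indep_dual[OF f indep] by blast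
  define U where "U x = (\<Prod>i\<in>{1..N}. u (d i) (x i))" for x
  have U_meas: "U \<in> borel_measurable ?P"
    unfolding U_def using u d unfolding is_L2_def
    by (intro borel_measurable_prod measurable_compose[OF measurable_component_singleton]) auto
  have U_sq_eq: "(U x)\<^sup>2 = (\<Prod>i\<in>{1..N}. u (d i) (x i) * u (d i) (x i))" for x
    unfolding U_def power2_eq_square prod.distrib ..
  have U_sq: "integrable ?P (\<lambda>x. (U x)\<^sup>2)"
    unfolding U_sq_eq using u d by (intro integrable_PiM_prod is_L2_mult_integrable) auto
  have "\<bar>C d\<bar> \<le> (t * (\<integral>x. (tensor_fn f M N C x)\<^sup>2 \<partial>?P) + (\<integral>x. (U x)\<^sup>2 \<partial>?P) / t) / 2"
    if t: "t > 0" for C t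
  proof -
    let ?g = "tensor_fn f M N C"
    have g_meas: "?g \<in> borel_measurable ?P" and g_sq: "integrable ?P (\<lambda>x. (?g x)\<^sup>2)"
      using f by (rule tensor_fn_measurable, rule tensor_fn_square_integrable)
    have "\<bar>C d\<bar> = \<bar>\<integral>x. ?g x * U x \<partial>?P\<bar>"
      using tensor_fn_coefficient_integral[OF f u dual d] unfolding U_def by simp
    also have "\<dots> \<le> (\<integral>x. \<bar>?g x * U x\<bar> \<partial>?P)"
      using integral_norm_bound[of ?P "\<lambda>x. ?g x * U x"] by simp
    also have "\<dots> \<le> (\<integral>x. (t * (?g x)\<^sup>2 + (U x)\<^sup>2 / t) / 2 \<partial>?P)"
      using square_integrable_mult[OF g_meas U_meas g_sq U_sq] g_sq U_sq
      by (intro Bochner_Integration.integral_mono abs_mult_le_weighted_squares t) auto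
    also have "\<dots> = (t * (\<integral>x. (?g x)\<^sup>2 \<partial>?P) + (\<integral>x. (U x)\<^sup>2 \<partial>?P) / t) / 2"
      using g_sq U_sq by simp
    finally show ?thesis .
  qed
  then show thesis by (rule that)
qed

lemma tensor_fn_coefficient_tendsto_0:
  fixes f :: "nat \<Rightarrow> 'a::euclidean_space \<Rightarrow> real"
  assumes f: "\<forall>d\<in>{1..M}. is_L2 (f d)" and indep: "L2_lin_indep f M"
    and d: "d \<in> PiE {1..N} (\<lambda>_. {1..M})"
    and small: "\<And>k. (\<integral>\<^sup>+ x. ennreal ((tensor_fn f M N (C k) x)\<^sup>2) \<partial>PiM {1..N} (\<lambda>_. lborel)) \<le> ennreal (1 / Suc k)"
  shows "(\<lambda>k. C k d) \<longlonglongrightarrow> 0"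
proof -
  let ?P = "PiM {1..N} (\<lambda>_. lborel :: 'a measure)"
  obtain K where K: "\<And>C t. t > 0 \<Longrightarrow>
      \<bar>C d\<bar> \<le> (t * (\<integral>x. (tensor_fn f M N C x)\<^sup>2 \<partial>?P) + K / t) / 2"
    using tensor_fn_coefficient_bound[OF f indep d] by blast
  have bound: "\<bar>C k d\<bar> \<le> (1 + K) / (2 * sqrt (Suc k))" for k
  proof -
    define s where "s = sqrt (Suc k)"
    have s: "s > 0" "s\<^sup>2 = Suc k" unfolding s_def by simp_all
    have "(\<integral>x. (tensor_fn f M N (C k) x)\<^sup>2 \<partial>?P) \<le> 1 / s\<^sup>2"
      using small[of k] tensor_fn_square_integrable[OF f] s(2)
      by (subst (asm) nn_integral_eq_integral) auto
    then have "s * (\<integral>x. (tensor_fn f M N (C k) x)\<^sup>2 \<partial>?P) \<le> s * (1 / s\<^sup>2)"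
      using s(1) by (rule mult_left_mono[OF _ less_imp_le])
    then have sI: "s * (\<integral>x. (tensor_fn f M N (C k) x)\<^sup>2 \<partial>?P) \<le> 1 / s"
      using s(1) by (simp add: power2_eq_square)
    have "\<bar>C k d\<bar> \<le> (s * (\<integral>x. (tensor_fn f M N (C k) x)\<^sup>2 \<partial>?P) + K / s) / 2"
      by (rule K[OF s(1)])
    also have "\<dots> \<le> (1 / s + K / s) / 2"
      by (rule divide_right_mono[OF add_right_mono[OF sI]]) simp
    also have "\<dots> = (1 + K) / (2 * s)"
      by (simp add: add_divide_distrib)
    finally show ?thesis by (simp only: s_def)
  qed
  have "\<forall>k. norm (C k d) \<le> (1 + K) / (2 * sqrt (Suc k))"
    using bound by simp
  moreover have "(\<lambda>k. (1 + K) / (2 * sqrt (Suc k))) \<longlonglongrightarrow> 0"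
    by real_asymp
  ultimately show ?thesis
    by (rule Lim_null_comparison[OF always_eventually])
qed

section \<open>Matricization and CP models\<close>

text \<open>\<open>undefined\<close> outside \<open>{1..N}\<close> keeps the result extensional, so that it lies in \<open>PiE\<close>.\<close>

definition interleave :: "nat \<Rightarrow> (nat \<Rightarrow> nat) \<Rightarrow> (nat \<Rightarrow> nat) \<Rightarrow> nat \<Rightarrow> nat" where
  "interleave N p q = (\<lambda>k. if k \<in> {1..N} then if odd k then p ((k + 1) div 2) else q (k div 2) else undefined)"

text \<open>The odd/even matricization of the paper, restricted to the rows and columns enumerated
  by \<open>e\<close>.\<close>

definition matricize :: "nat \<Rightarrow> (nat \<Rightarrow> nat \<Rightarrow> nat) \<Rightarrow> nat \<Rightarrow> tensor \<Rightarrow> real mat" where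
  "matricize R e N A = mat R R (\<lambda>(i, j). A (interleave N (e i) (e j)))"

definition cp_tensor :: "nat \<Rightarrow> nat \<Rightarrow> (nat \<Rightarrow> real) \<Rightarrow> (nat \<Rightarrow> nat \<Rightarrow> nat \<Rightarrow> real) \<Rightarrow> tensor" where
  "cp_tensor N Z a b = (\<lambda>d. \<Sum>z\<in>{1..Z}. a z * (\<Prod>i\<in>{1..N}. b z i (d i)))"

lemma matricize_carrier: "matricize R e N A \<in> carrier_mat R R"
  unfolding matricize_def by simp

lemma interleave_odd: "l \<in> {1..n} \<Longrightarrow> interleave (2 * n) p q (2 * l - 1) = p l"
  unfolding interleave_def by auto

lemma interleave_even: "l \<in> {1..n} \<Longrightarrow> interleave (2 * n) p q (2 * l) = q l"
  unfolding interleave_def by auto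

lemma interleave_PiE:
  assumes "p \<in> PiE {1..n} (\<lambda>_. {1..m})" and "q \<in> PiE {1..n} (\<lambda>_. {1..m})" and "m \<le> M"
  shows "interleave (2 * n) p q \<in> PiE {1..2 * n} (\<lambda>_. {1..M})"
proof -
  have in_m: "interleave (2 * n) p q k \<in> {1..m}" if k: "k \<in> {1..2 * n}" for k
  proof (cases "odd k")
    case True
    then have "(k + 1) div 2 \<in> {1..n}" using k by (auto elim!: oddE)
    then have "p ((k + 1) div 2) \<in> {1..m}" by (rule PiE_mem[OF assms(1)])
    then show ?thesis using True k unfolding interleave_def by simp
  next
    case False
    then have "k div 2 \<in> {1..n}" using k by auto
    then have "q (k div 2) \<in> {1..m}" by (rule PiE_mem[OF assms(2)])
    then show ?thesis using False k unfolding interleave_def by simp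
  qed
  moreover have "interleave (2 * n) p q \<in> extensional {1..2 * n}"
    by (simp add: interleave_def extensional_def)
  ultimately show ?thesis
    using assms(3) by (force simp: PiE_iff)
qed

lemma prod_atLeast1_double:
  fixes n :: nat
  shows "(\<Prod>k\<in>{1..2 * n}. h k) = (\<Prod>l\<in>{1..n}. h (2 * l - 1) * h (2 * l))"
proof (induction n)
  case (Suc n)
  have "{1..2 * Suc n} = insert (2 * n + 2) (insert (2 * n + 1) {1..2 * n})" by auto
  then have "(\<Prod>k\<in>{1..2 * Suc n}. h k) = h (2 * n + 2) * (h (2 * n + 1) * (\<Prod>k\<in>{1..2 * n}. h k))"
    by simp
  also have "\<dots> = (\<Prod>l\<in>{1..Suc n}. h (2 * l - 1) * h (2 * l))"
    using Suc by (simp add: atLeastAtMostSuc_conv ac_simps)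
  finally show ?case .
qed simp

lemma prod_atLeast1_add:
  fixes a b :: nat
  shows "(\<Prod>i\<in>{1..a + b}. h i) = (\<Prod>i\<in>{1..a}. h i) * (\<Prod>i\<in>{1..b}. h (a + i))"
proof (induction b)
  case (Suc b)
  then show ?case by (simp add: atLeastAtMostSuc_conv ac_simps)
qed simp

lemma cp_fn_eq_tensor_fn: "cp_fn f M N Z a b = tensor_fn f M N (cp_tensor N Z a b)"
proof
  fix x
  let ?D = "PiE {1..N} (\<lambda>_. {1..M})"
  have "cp_fn f M N Z a b x = (\<Sum>z\<in>{1..Z}. \<Sum>d\<in>?D. a z * (\<Prod>i\<in>{1..N}. b z i (d i)) * (\<Prod>i\<in>{1..N}. f (d i) (x i)))"
    unfolding cp_fn_def by (simp add: prod_sum_PiE sum_distrib_left prod.distrib mult.assoc)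
  also have "\<dots> = tensor_fn f M N (cp_tensor N Z a b) x"
    unfolding tensor_fn_def cp_tensor_def by (subst sum.swap) (simp add: sum_distrib_right)
  finally show "cp_fn f M N Z a b x = tensor_fn f M N (cp_tensor N Z a b) x" .
qed

lemma tensor_fn_diff:
  "tensor_fn f M N (\<lambda>d. A d - B d) x = tensor_fn f M N A x - tensor_fn f M N B x"
  unfolding tensor_fn_def by (simp add: left_diff_distrib sum_subtractf)

lemma det_zero_row:
  assumes "A \<in> carrier_mat n n" and "k < n" and "\<And>j. j < n \<Longrightarrow> A $$ (k, j) = 0"
  shows "det A = 0"
proof -
  have "(\<Prod>i = 0..<n. A $$ (i, p i)) = 0" if "p permutes {0..<n}" for p
    using that assms(2,3) permutes_in_image[OF that, of k] by (intro prod_zero bexI[of _ k]) auto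
  then show ?thesis unfolding det_def'[OF assms(1)] by simp
qed

lemma det_matricize_cp_tensor:
  assumes "Z < R"
  shows "det (matricize R e (2 * n) (cp_tensor (2 * n) Z a b)) = 0"
proof -
  define U where "U = mat R R (\<lambda>(i, z). if z < Z then a (Suc z) * (\<Prod>l\<in>{1..n}. b (Suc z) (2 * l - 1) (e i l)) else 0)"
  define V where "V = mat R R (\<lambda>(z, j). if z < Z then (\<Prod>l\<in>{1..n}. b (Suc z) (2 * l) (e j l)) else 0)"
  have U: "U \<in> carrier_mat R R" and V: "V \<in> carrier_mat R R"
    unfolding U_def V_def by auto
  have "matricize R e (2 * n) (cp_tensor (2 * n) Z a b) = U * V"
  proof (rule eq_matI)
    fix i j assume "i < dim_row (U * V)" and "j < dim_col (U * V)"
    then have i: "i < R" and j: "j < R" using U V by auto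
    have "(U * V) $$ (i, j) = (\<Sum>z<R. U $$ (i, z) * V $$ (z, j))"
      using i j U V by (simp add: scalar_prod_def atLeast0LessThan)
    also have "\<dots> = (\<Sum>z<Z. U $$ (i, z) * V $$ (z, j))"
      using j assms by (intro sum.mono_neutral_right) (auto simp: V_def)
    also have "\<dots> = (\<Sum>z<Z. a (Suc z) * (\<Prod>l\<in>{1..n}. b (Suc z) (2 * l - 1) (e i l) * b (Suc z) (2 * l) (e j l)))"
      using i j assms unfolding U_def V_def by (intro sum.cong refl) (simp add: prod.distrib mult.assoc)
    also have "\<dots> = (\<Sum>z\<in>{1..Z}. a z * (\<Prod>l\<in>{1..n}. b z (2 * l - 1) (e i l) * b z (2 * l) (e j l)))"
      by (simp add: sum.atLeast1_atMost_eq)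
    also have "\<dots> = cp_tensor (2 * n) Z a b (interleave (2 * n) (e i) (e j))"
      unfolding cp_tensor_def prod_atLeast1_double
      by (intro sum.cong refl arg_cong2[where f = "(*)"] prod.cong) (simp_all only: interleave_odd interleave_even)
    finally show "matricize R e (2 * n) (cp_tensor (2 * n) Z a b) $$ (i, j) = (U * V) $$ (i, j)"
      using i j by (simp add: matricize_def)
  qed (use U V in \<open>auto simp: matricize_def\<close>)
  moreover have "det V = 0"
    by (rule det_zero_row[OF V assms]) (use assms in \<open>simp add: V_def\<close>)
  ultimately show ?thesis
    using det_mult[OF U V] by simp
qed

lemma det_matricize_tendsto:
  assumes "\<And>i j. i < R \<Longrightarrow> j < R \<Longrightarrow> (\<lambda>k. T k (interleave N (e i) (e j))) \<longlonglongrightarrow> A (interleave N (e i) (e j))"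
  shows "(\<lambda>k. det (matricize R e N (T k))) \<longlonglongrightarrow> det (matricize R e N A)"
proof -
  have "p i < R" if "p permutes {0..<R}" and "i < R" for p i
    using that permutes_in_image by fastforce
  then show ?thesis
    unfolding det_def'[OF matricize_carrier]
    by (intro tendsto_sum tendsto_mult_left tendsto_prod) (auto simp: matricize_def assms)
qed

lemma not_CP_approximable_if_det_matricize_nonzero:
  fixes f :: "nat \<Rightarrow> 'a::euclidean_space \<Rightarrow> real"
  assumes f: "\<forall>d\<in>{1..M}. is_L2 (f d)" and indep: "L2_lin_indep f M"
    and "m \<le> M" and e: "\<forall>i<m ^ n. e i \<in> PiE {1..n} (\<lambda>_. {1..m})"
    and det: "det (matricize (m ^ n) e (2 * n) A) \<noteq> 0"
  shows "not_CP_approximable f M (2 * n) (tensor_fn f M (2 * n) A) (m ^ n)"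
proof (rule ccontr)
  let ?P = "PiM {1..2 * n} (\<lambda>_. lborel :: 'a measure)"
  define close where "close k Z a b \<longleftrightarrow> Z < m ^ n \<and>
    (\<integral>\<^sup>+ x. ennreal ((cp_fn f M (2 * n) Z a b x - tensor_fn f M (2 * n) A x)\<^sup>2) \<partial>?P) \<le> ennreal (1 / Suc k)"
    for k Z a b
  assume "\<not> ?thesis"
  then have approx: "\<forall>\<epsilon>>0. \<exists>Z<m ^ n. \<exists>a b.
      (\<integral>\<^sup>+ x. ennreal ((cp_fn f M (2 * n) Z a b x - tensor_fn f M (2 * n) A x)\<^sup>2) \<partial>?P) \<le> ennreal \<epsilon>"
    unfolding not_CP_approximable_def by (auto simp: not_less) (meson not_le)
  have "\<exists>Z a b. close k Z a b" for k
    using approx[rule_format, of "1 / Suc k"] unfolding close_def by auto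
  then obtain Z a b where close: "\<And>k. close k (Z k) (a k) (b k)"
    by metis
  define T where "T k = cp_tensor (2 * n) (Z k) (a k) (b k)" for k
  have "(\<lambda>k. T k d - A d) \<longlonglongrightarrow> 0" if "d \<in> PiE {1..2 * n} (\<lambda>_. {1..M})" for d
    using close unfolding close_def
    by (intro tensor_fn_coefficient_tendsto_0[OF f indep that]) (simp add: T_def cp_fn_eq_tensor_fn tensor_fn_diff)
  then have "(\<lambda>k. T k d) \<longlonglongrightarrow> A d" if "d \<in> PiE {1..2 * n} (\<lambda>_. {1..M})" for d
    using that by (simp add: LIM_zero_iff)
  then have "(\<lambda>k. det (matricize (m ^ n) e (2 * n) (T k))) \<longlonglongrightarrow> det (matricize (m ^ n) e (2 * n) A)"
    using e interleave_PiE[OF _ _ \<open>m \<le> M\<close>] by (intro det_matricize_tendsto) simp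
  moreover have "det (matricize (m ^ n) e (2 * n) (T k)) = 0" for k
    using close[of k] unfolding T_def close_def by (intro det_matricize_cp_tensor) simp
  ultimately have "(\<lambda>k. 0) \<longlonglongrightarrow> det (matricize (m ^ n) e (2 * n) A)"
    by simp
  with det show False
    using LIMSEQ_unique[OF tendsto_const] by metis
qed

section \<open>Hierarchical Tucker models\<close>

lemma ht_phi_poly_fun:
  assumes "\<And>l j \<gamma> \<alpha>. (\<lambda>w. W w l j \<gamma> \<alpha>) \<in> poly_fun I"
  shows "(\<lambda>w. ht_phi (W w) r l j \<gamma> d) \<in> poly_fun I"
proof (induction l arbitrary: j \<gamma> d)
  case 0
  show ?case using assms by simp
next
  case (Suc l)
  show ?case
    unfolding ht_phi.simps tensor_prod_def
    by (intro poly_fun_sum poly_fun_mult assms Suc) simp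
qed

text \<open>Level 0 embeds channel \<open>\<gamma>\<close> as the \<open>\<gamma>\<close>-th unit vector, level 1 sums over the diagonal and
  higher levels keep channel 1 only, so that every \<open>\<phi>\<close> becomes a tensor product of truncated
  identity matrices.\<close>

definition ht_witness_weight :: "nat \<Rightarrow> nat \<Rightarrow> nat \<Rightarrow> real" where
  "ht_witness_weight l \<gamma> \<alpha> = (if l = 0 then of_bool (\<alpha> = \<gamma>) else of_bool (l = 1 \<or> \<alpha> = 1))"

lemma ht_idx_leafI:
  "j \<in> {1..2 ^ L} \<Longrightarrow> \<gamma> \<in> {1..r 0} \<Longrightarrow> a \<in> {1..M} \<Longrightarrow> (0, j, \<gamma>, a) \<in> ht_idx M (2 ^ L) L r Y"
  unfolding ht_idx_def by auto

lemma ht_idx_innerI: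
  assumes "1 \<le> l" and "l \<le> L" and "j \<in> {1..2 ^ (L - l)}"
    and "\<gamma> \<in> (if l < L then {1..r l} else {1..Y})" and "\<alpha> \<in> {1..r (l - 1)}"
  shows "(l, j, \<gamma>, \<alpha>) \<in> ht_idx M (2 ^ L) L r Y"
proof (cases "l < L")
  case True
  then have "(2::nat) ^ L div 2 ^ l = 2 ^ (L - l)"
    by (simp add: power_diff)
  with True assms show ?thesis unfolding ht_idx_def by auto
next
  case False
  with assms show ?thesis unfolding ht_idx_def by auto
qed

lemma ht_phi_witness_level_one:
  fixes W :: "nat \<Rightarrow> nat \<Rightarrow> nat \<Rightarrow> nat \<Rightarrow> real"
  assumes W: "\<And>l j \<gamma> \<alpha>. (l, j, \<gamma>, \<alpha>) \<in> ht_idx M (2 ^ L) L r Y \<Longrightarrow> W l j \<gamma> \<alpha> = ht_witness_weight l \<gamma> \<alpha>"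
    and "Suc 0 \<le> L" and "j \<in> {1..2 ^ (L - Suc 0)}"
    and "\<gamma> \<in> (if Suc 0 < L then {1..r (Suc 0)} else {1..Y})"
    and d: "d 1 \<in> {1..M}" "d 2 \<in> {1..M}"
  shows "ht_phi W r (Suc 0) j \<gamma> d = of_bool (d 1 = d 2 \<and> d 2 \<le> r 0)"
proof -
  have "2 * j \<le> 2 ^ L" and "1 \<le> j" using assms(2,3) by (cases L; auto)+
  then have leaves: "2 * j - 1 \<in> {1..2 ^ L}" "2 * j \<in> {1..2 ^ L}" by auto
  have "W 0 (2 * j - 1) \<alpha> (d 1) = of_bool (d 1 = \<alpha>)" and "W 0 (2 * j) \<alpha> (d 2) = of_bool (d 2 = \<alpha>)"
    and "W 1 j \<gamma> \<alpha> = 1" if "\<alpha> \<in> {1..r 0}" for \<alpha>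
    using W[OF ht_idx_leafI[where r = r, OF leaves(1) that d(1)]] W[OF ht_idx_leafI[where r = r, OF leaves(2) that d(2)]]
      W[OF ht_idx_innerI[of "Suc 0" L j \<gamma> r Y \<alpha>]] that assms(2-4)
    by (auto simp: ht_witness_weight_def)
  then have "ht_phi W r (Suc 0) j \<gamma> d = (\<Sum>\<alpha>\<in>{1..r 0}. of_bool (d 1 = \<alpha>) * of_bool (d 2 = \<alpha>))"
    unfolding ht_phi.simps by (intro sum.cong refl) (simp add: tensor_prod_def numeral_2_eq_2[symmetric])
  also have "\<dots> = (\<Sum>\<alpha>\<in>{1..r 0}. if \<alpha> = d 1 then of_bool (d 1 = d 2) else 0)"
    by (intro sum.cong refl) auto
  also have "\<dots> = of_bool (d 1 = d 2 \<and> d 2 \<le> r 0)"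
    using d by (auto simp: sum.delta)
  finally show ?thesis .
qed

lemma ht_phi_witness:
  fixes W :: "nat \<Rightarrow> nat \<Rightarrow> nat \<Rightarrow> nat \<Rightarrow> real"
  assumes rpos: "\<forall>l<L. r l > 0"
    and W: "\<And>l j \<gamma> \<alpha>. (l, j, \<gamma>, \<alpha>) \<in> ht_idx M (2 ^ L) L r Y \<Longrightarrow> W l j \<gamma> \<alpha> = ht_witness_weight l \<gamma> \<alpha>"
    and "Suc k \<le> L" and "j \<in> {1..2 ^ (L - Suc k)}"
    and "\<gamma> \<in> (if Suc k < L then {1..r (Suc k)} else {1..Y})"
    and "\<forall>i\<in>{1..2 ^ Suc k}. d i \<in> {1..M}"
  shows "ht_phi W r (Suc k) j \<gamma> d = (\<Prod>i\<in>{1..2 ^ k}. of_bool (d (2 * i - 1) = d (2 * i) \<and> d (2 * i) \<le> r 0))"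
  using assms(3-)
proof (induction k arbitrary: j \<gamma> d)
  case 0
  then show ?case by (simp add: ht_phi_witness_level_one[OF W] del: ht_phi.simps)
next
  case (Suc k)
  let ?pair = "\<lambda>d i. of_bool (d (2 * i - 1) = d (2 * i) \<and> d (2 * i) \<le> r 0) :: real"
  have k: "Suc k < L" using Suc.prems(1) by simp
  have "(2::nat) ^ (L - Suc k) = 2 * 2 ^ (L - Suc (Suc k))"
    using k by (metis Suc_diff_Suc power_Suc)
  then have children: "2 * j - 1 \<in> {1..2 ^ (L - Suc k)}" "2 * j \<in> {1..2 ^ (L - Suc k)}"
    using Suc.prems(2) by auto
  have one: "1 \<in> (if Suc k < L then {1..r (Suc k)} else {1..Y})"
    using k rpos by auto
  have top: "W (Suc (Suc k)) j \<gamma> \<alpha> = of_bool (\<alpha> = 1)" if "\<alpha> \<in> {1..r (Suc k)}" for \<alpha>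
    using that Suc.prems by (simp add: W ht_idx_innerI ht_witness_weight_def)
  have "ht_phi W r (Suc (Suc k)) j \<gamma> d = (\<Sum>\<alpha>\<in>{1..r (Suc k)}. of_bool (\<alpha> = 1) *
      (ht_phi W r (Suc k) (2 * j - 1) \<alpha> d * ht_phi W r (Suc k) (2 * j) \<alpha> (\<lambda>i. d (2 ^ Suc k + i))))"
    by (subst ht_phi.simps(2), unfold tensor_prod_def) (intro sum.cong refl, simp add: top del: ht_phi.simps)
  also have "\<dots> = ht_phi W r (Suc k) (2 * j - 1) 1 d * ht_phi W r (Suc k) (2 * j) 1 (\<lambda>i. d (2 ^ Suc k + i))"
  proof -
    have "{1..r (Suc k)} \<inter> {\<alpha>. \<alpha> = 1} = {1}" using one k by auto
    then show ?thesis by (simp del: ht_phi.simps)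
  qed
  also have "\<dots> = (\<Prod>i\<in>{1..2 ^ k}. ?pair d i) * (\<Prod>i\<in>{1..2 ^ k}. ?pair (\<lambda>i. d (2 ^ Suc k + i)) i)"
    using Suc.IH[OF _ children(1) one] Suc.IH[OF _ children(2) one] Suc.prems(4) k by simp
  also have "(\<Prod>i\<in>{1..2 ^ k}. ?pair (\<lambda>i. d (2 ^ Suc k + i)) i) = (\<Prod>i\<in>{1..2 ^ k}. ?pair d (2 ^ k + i))"
    by (intro prod.cong refl) (auto simp: algebra_simps)
  also have "(\<Prod>i\<in>{1..2 ^ k}. ?pair d i) * \<dots> = (\<Prod>i\<in>{1..2 ^ Suc k}. ?pair d i)"
    by (simp only: power_Suc mult_2 prod_atLeast1_add)
  finally show ?case .
qed

lemma matricize_ht_witness: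
  fixes W :: "nat \<Rightarrow> nat \<Rightarrow> nat \<Rightarrow> nat \<Rightarrow> real"
  assumes rpos: "\<forall>l<Suc k. r l > 0"
    and W: "\<And>l j \<gamma> \<alpha>. (l, j, \<gamma>, \<alpha>) \<in> ht_idx M (2 ^ Suc k) (Suc k) r Y \<Longrightarrow> W l j \<gamma> \<alpha> = ht_witness_weight l \<gamma> \<alpha>"
    and "m \<le> r 0" and "m \<le> M" and e: "bij_betw e {..<m ^ 2 ^ k} (PiE {1..2 ^ k} (\<lambda>_. {1..m}))"
    and "y \<in> {1..Y}"
  shows "matricize (m ^ 2 ^ k) e (2 * 2 ^ k) (ht_phi W r (Suc k) 1 y) = 1\<^sub>m (m ^ 2 ^ k)"
proof (rule eq_matI)
  let ?n = "2 ^ k :: nat"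
  fix i j assume "i < dim_row (1\<^sub>m (m ^ ?n))" and "j < dim_col (1\<^sub>m (m ^ ?n))"
  then have i: "i < m ^ ?n" and j: "j < m ^ ?n" by auto
  then have ei: "e i \<in> PiE {1..?n} (\<lambda>_. {1..m})" and ej: "e j \<in> PiE {1..?n} (\<lambda>_. {1..m})"
    using bij_betw_apply[OF e] by auto
  let ?d = "interleave (2 * ?n) (e i) (e j)"
  have "ht_phi W r (Suc k) 1 y ?d = (\<Prod>l\<in>{1..?n}. of_bool (?d (2 * l - 1) = ?d (2 * l) \<and> ?d (2 * l) \<le> r 0))"
    using interleave_PiE[OF ei ej \<open>m \<le> M\<close>] \<open>y \<in> {1..Y}\<close>
    by (intro ht_phi_witness[OF rpos W]) auto
  also have "\<dots> = (\<Prod>l\<in>{1..?n}. of_bool (e i l = e j l \<and> e j l \<le> r 0))"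
    by (rule prod.cong[OF refl]) (simp only: interleave_odd interleave_even)
  also have "\<dots> = of_bool (i = j)"
  proof (cases "i = j")
    case True
    have "e j l \<le> r 0" if "l \<in> {1..?n}" for l
      using PiE_mem[OF ej that] \<open>m \<le> r 0\<close> by auto
    then show ?thesis using True by simp
  next
    case False
    then have "e i \<noteq> e j"
      using i j bij_betw_imp_inj_on[OF e] by (auto simp: inj_on_def)
    then obtain l where "l \<in> {1..?n}" and "e i l \<noteq> e j l"
      using PiE_ext[OF ei ej] by blast
    then show ?thesis using False by (auto intro: prod_zero)
  qed
  finally show "matricize (m ^ ?n) e (2 * ?n) (ht_phi W r (Suc k) 1 y) $$ (i, j) = 1\<^sub>m (m ^ ?n) $$ (i, j)"
    using i j by (simp add: matricize_def)
qed (simp_all add: matricize_def)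

lemma finite_ht_idx: "finite (ht_idx M N L r Y)"
proof -
  define K where "K = M + Y + (\<Sum>l\<le>L. r l)"
  have r: "r l \<le> K" if "l \<le> L" for l
    unfolding K_def using that member_le_sum[of l "{..L}" r] by auto
  have "ht_idx M N L r Y \<subseteq> {..L} \<times> {..Suc N} \<times> {..K} \<times> {..K}"
  proof
    fix x assume "x \<in> ht_idx M N L r Y"
    then show "x \<in> {..L} \<times> {..Suc N} \<times> {..K} \<times> {..K}"
      unfolding ht_idx_def
    proof (elim UnE CollectE exE conjE)
      fix l j \<gamma> \<alpha> assume "x = (l, j, \<gamma>, \<alpha>)" "1 \<le> l" "l < L" "j \<in> {1..N div 2 ^ l}"
        "\<gamma> \<in> {1..r l}" "\<alpha> \<in> {1..r (l - 1)}"
      moreover have "j \<le> N div 2 ^ l"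
        using \<open>j \<in> {1..N div 2 ^ l}\<close> by simp
      then have "j \<le> N"
        using div_le_dividend order_trans by blast
      moreover have "r l \<le> K" and "r (l - 1) \<le> K"
        using r \<open>l < L\<close> by simp_all
      ultimately show ?thesis by auto
    qed (use r[of 0] r[of "L - 1"] in \<open>auto simp: K_def\<close>)
  qed
  then show ?thesis by (rule finite_subset) auto
qed

lemma finite_ht_shared_idx: "finite (ht_shared_idx M L r Y)"
proof -
  define K where "K = M + Y + (\<Sum>l\<le>L. r l)"
  have r: "r l \<le> K" if "l \<le> L" for l
    unfolding K_def using that member_le_sum[of l "{..L}" r] by auto
  have "ht_shared_idx M L r Y \<subseteq> {..L} \<times> {..1} \<times> {..K} \<times> {..K}"
  proof
    fix x assume "x \<in> ht_shared_idx M L r Y"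
    then show "x \<in> {..L} \<times> {..1} \<times> {..K} \<times> {..K}"
      unfolding ht_shared_idx_def
    proof (elim UnE CollectE exE conjE)
      fix l \<gamma> \<alpha> assume "x = (l, 1, \<gamma>, \<alpha>)" "1 \<le> l" "l < L" "\<gamma> \<in> {1..r l}" "\<alpha> \<in> {1..r (l - 1)}"
      moreover have "r l \<le> K" and "r (l - 1) \<le> K"
        using r \<open>l < L\<close> by simp_all
      ultimately show ?thesis by auto
    qed (use r[of 0] r[of "L - 1"] in \<open>auto simp: K_def\<close>)
  qed
  then show ?thesis by (rule finite_subset) auto
qed

text \<open>\<open>\<tau>\<close> maps a node position \<open>j\<close> to the slot its weights are stored in: the identity for the
  plain model and the constant 1 under weight sharing.\<close>

lemma AE_not_CP_approximable_ht_phi: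
  fixes f :: "nat \<Rightarrow> 'a::euclidean_space \<Rightarrow> real" and \<tau> :: "nat \<Rightarrow> nat"
  assumes f: "\<forall>d\<in>{1..M}. is_L2 (f d)" and indep: "L2_lin_indep f M"
    and rpos: "\<forall>l<Suc k. r l > 0"
    and I: "finite I" and P: "continuous_weight_dist I P"
    and idx: "\<And>l j \<gamma> \<alpha>. (l, j, \<gamma>, \<alpha>) \<in> ht_idx M (2 ^ Suc k) (Suc k) r Y \<Longrightarrow> (l, \<tau> j, \<gamma>, \<alpha>) \<in> I"
  shows "AE w in P. \<forall>y\<in>{1..Y}. not_CP_approximable f M (2 ^ Suc k)
           (tensor_fn f M (2 ^ Suc k) (ht_phi (\<lambda>l j \<gamma> \<alpha>. w (l, \<tau> j, \<gamma>, \<alpha>)) r (Suc k) 1 y))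
           (min (r 0) M ^ 2 ^ k)"
proof (rule eventually_ball_finite[OF finite_atLeastAtMost, rule_format])
  define m where "m = min (r 0) M"
  let ?n = "2 ^ k :: nat"
  fix y assume y: "y \<in> {1..Y}"
  obtain e where e: "bij_betw e {..<m ^ ?n} (PiE {1..?n} (\<lambda>_. {1..m}))"
    using ex_bij_betw_nat_finite[of "PiE {1..?n} (\<lambda>_. {1..m})"]
    by (auto simp: finite_PiE card_PiE lessThan_atLeast0)
  define p where "p w = det (matricize (m ^ ?n) e (2 * ?n) (ht_phi (\<lambda>l j \<gamma> \<alpha>. w (l, \<tau> j, \<gamma>, \<alpha>)) r (Suc k) 1 y))"
    for w :: "nat \<times> nat \<times> nat \<times> nat \<Rightarrow> real"
  define w0 where "w0 = restrict (\<lambda>(l, j, \<gamma>, \<alpha>). ht_witness_weight l \<gamma> \<alpha>) I"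
  have "(\<lambda>w. matricize (m ^ ?n) e (2 * ?n) (ht_phi (\<lambda>l j \<gamma> \<alpha>. w (l, \<tau> j, \<gamma>, \<alpha>)) r (Suc k) 1 y) $$ (i, j))
      \<in> poly_fun UNIV" if "i < m ^ ?n" and "j < m ^ ?n" for i j
    using that unfolding matricize_def
    by (simp del: ht_phi.simps) (intro ht_phi_poly_fun poly_fun_var UNIV_I)
  then have "p \<in> poly_fun UNIV"
    unfolding p_def by (rule det_poly_fun[OF matricize_carrier])
  moreover have "w0 \<in> PiE I (\<lambda>_. UNIV)"
    unfolding w0_def by simp
  moreover have "p w0 = 1"
    unfolding p_def using y e idx
    by (subst matricize_ht_witness[OF rpos]) (auto simp: w0_def m_def)
  ultimately have "AE w in P. p w \<noteq> 0"
    by (intro AE_poly_fun_nonzero[OF I P]) auto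
  moreover have "\<forall>i<m ^ ?n. e i \<in> PiE {1..?n} (\<lambda>_. {1..m})"
    using bij_betw_apply[OF e] by simp
  ultimately show "AE w in P. not_CP_approximable f M (2 ^ Suc k)
      (tensor_fn f M (2 ^ Suc k) (ht_phi (\<lambda>l j \<gamma> \<alpha>. w (l, \<tau> j, \<gamma>, \<alpha>)) r (Suc k) 1 y)) (min (r 0) M ^ 2 ^ k)"
    using not_CP_approximable_if_det_matricize_nonzero[OF f indep, of m ?n e] m_def
    by (elim AE_mp) (simp add: p_def)
qed

theorem corollary1:
  fixes f :: "nat \<Rightarrow> 'a::euclidean_space \<Rightarrow> real"
    and M Y L N :: nat and r :: "nat \<Rightarrow> nat"
  assumes "L \<ge> 1" and "N = 2 ^ L"
    and "\<forall>l<L. r l > 0"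
    and "\<forall>d\<in>{1..M}. is_L2 (f d)"
    and "L2_lin_indep f M"
  shows "(\<forall>P. continuous_weight_dist (ht_idx M N L r Y) P \<longrightarrow>
            (AE w in P. \<forall>y\<in>{1..Y}. not_CP_approximable f M N
               (tensor_fn f M N (ht_phi (\<lambda>l j \<gamma> \<alpha>. w (l, j, \<gamma>, \<alpha>)) r L 1 y))
               (min (r 0) M ^ (N div 2))))
       \<and> (\<forall>P. continuous_weight_dist (ht_shared_idx M L r Y) P \<longrightarrow>
            (AE w in P. \<forall>y\<in>{1..Y}. not_CP_approximable f M N
               (tensor_fn f M N (ht_phi (\<lambda>l j \<gamma> \<alpha>. w (l, 1, \<gamma>, \<alpha>)) r L 1 y))
               (min (r 0) M ^ (N div 2))))"
proof -
  obtain k where L: "L = Suc k" using \<open>L \<ge> 1\<close> by (cases L) auto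
  have N: "N = 2 ^ Suc k" and "N div 2 = 2 ^ k" using \<open>N = 2 ^ L\<close> L by simp_all
  note AE_ht = AE_not_CP_approximable_ht_phi[OF assms(4,5), where k = k and r = r and Y = Y,
      folded L N, unfolded \<open>N div 2 = 2 ^ k\<close>[symmetric]]
  show ?thesis
  proof (intro conjI allI impI)
    fix P assume "continuous_weight_dist (ht_idx M N L r Y) P"
    then show "AE w in P. \<forall>y\<in>{1..Y}. not_CP_approximable f M N
        (tensor_fn f M N (ht_phi (\<lambda>l j \<gamma> \<alpha>. w (l, j, \<gamma>, \<alpha>)) r L 1 y)) (min (r 0) M ^ (N div 2))"
      using AE_ht[where I = "ht_idx M N L r Y" and P = P and \<tau> = "\<lambda>j. j"] assms(3) finite_ht_idx by blast
  next
    fix P assume "continuous_weight_dist (ht_shared_idx M L r Y) P"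
    then show "AE w in P. \<forall>y\<in>{1..Y}. not_CP_approximable f M N
        (tensor_fn f M N (ht_phi (\<lambda>l j \<gamma> \<alpha>. w (l, 1, \<gamma>, \<alpha>)) r L 1 y)) (min (r 0) M ^ (N div 2))"
      using AE_ht[where I = "ht_shared_idx M L r Y" and P = P and \<tau> = "\<lambda>_. 1"] assms(3) finite_ht_shared_idx
      by (auto simp: ht_idx_def ht_shared_idx_def)
  qed
qed

end
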